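(* $\mathcal{L}_{\mathsf{SAFA}}\subsetneq\mathcal{L}_{\mathsf{CMA}}$: every data language accepted by a SAFA is accepted by some class memory automaton, and some data language accepted by a class memory automaton is accepted by no SAFA.
   Context: $D$ is a fixed countably infinite set of data values; for a finite alphabet $\Sigma$, data languages are subsets of $(\Sigma\times D)^*$. A set augmented finite automaton (SAFA) is a tuple $M=(Q,\Sigma\times D,q_0,F,H,\delta)$: $Q$ finite set of states, $q_0\in Q$ initial, $F\subseteq Q$ final, $H=\{h_1,\dots,h_m\}$ a finite collection of (names of) sets of data values, $\delta\subseteq Q\times\Sigma\times C\times OP\times Q$ with $C=\{p(h_i),\,!p(h_i)\}$, $OP=\{-\}\cup\{\mathsf{ins}(h_i)\}$. Configurations are $(q,\langle S_1,\dots,S_m\rangle)$, $S_i\subseteq D$ finite; initially state $q_0$ and all sets empty. On reading $(a,d)$, a transition $(q,a,\alpha,op,q')$ from the current state may be taken if $\alpha=p(h_i)$ and $d\in S_i$, or $\alpha=\,!p(h_i)$ and $d\notin S_i$; then the state becomes $q'$ and if $op=\mathsf{ins}(h_j)$, $d$ is added to $S_j$. A word is accepted if some run reads it entirely and ends in $F$; $\mathcal{L}_{\mathsf{SAFA}}$ is the class of languages accepted by SAFA. A class memory automaton (CMA) is a tuple $(Q,\Sigma,\delta,q_0,F_\ell,F_g)$ with finite state set $Q$, initial state $q_0$, accepting sets $F_g\subseteq F_\ell\subseteq Q$, and $\delta\subseteq Q\times\Sigma\times(Q\cup\{\bot\})\times Q$. The automaton records for each data value $d$ the state $f(d)$ it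 entered the last time it read a position carrying $d$ ($f(d)=\bot$ if $d$ has not been read). On reading $(a,d)$ in state $q$ it may take a transition $(q,a,f(d),q')\in\delta$, after which the state is $q'$ and $f(d):=q'$. A word is accepted if some run reads it entirely, ends in a state of $F_g$, and $f(d)\in F_\ell$ for every data value $d$ occurring in the word. $\mathcal{L}_{\mathsf{CMA}}$ is the class of languages accepted by CMA. *)

theory Defs
  imports Main
begin

text \<open>Data values D: modelled by the countably infinite type nat.
  Letters of the finite alphabet Sigma and automaton states are also
  encoded as natural numbers (any finite alphabet / state set can be renamed).
  A data word is a list of (letter, data value) pairs.\<close>

type_synonym dword = "(nat \<times> nat) list"

datatype safa_cond = InSet nat | NotInSet nat
datatype safa_op = NoOp | Ins nat

record safa =
  sQ :: "nat set"
  sq0 :: nat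
  sF :: "nat set"
  sm :: nat                                         (* sets h_0 .. h_(m-1) *)
  sdelta :: "(nat \<times> nat \<times> safa_cond \<times> safa_op \<times> nat) set"

definition safa_wf :: "nat set \<Rightarrow> safa \<Rightarrow> bool" where
  "safa_wf \<Sigma> M \<longleftrightarrow> finite (sQ M) \<and> sq0 M \<in> sQ M \<and> sF M \<subseteq> sQ M \<and>
     (\<forall>(q, a, c, op, q') \<in> sdelta M. q \<in> sQ M \<and> a \<in> \<Sigma> \<and> q' \<in> sQ M \<and>
        (case c of InSet i \<Rightarrow> i < sm M | NotInSet i \<Rightarrow> i < sm M) \<and>
        (case op of NoOp \<Rightarrow> True | Ins j \<Rightarrow> j < sm M))"

fun cond_sat :: "safa_cond \<Rightarrow> nat \<Rightarrow> (nat \<Rightarrow> nat set) \<Rightarrow> bool" where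
  "cond_sat (InSet i) d S \<longleftrightarrow> d \<in> S i"
| "cond_sat (NotInSet i) d S \<longleftrightarrow> d \<notin> S i"

fun op_apply :: "safa_op \<Rightarrow> nat \<Rightarrow> (nat \<Rightarrow> nat set) \<Rightarrow> (nat \<Rightarrow> nat set)" where
  "op_apply NoOp d S = S"
| "op_apply (Ins j) d S = S(j := insert d (S j))"

inductive safa_reach :: "safa \<Rightarrow> dword \<Rightarrow> nat \<Rightarrow> (nat \<Rightarrow> nat set) \<Rightarrow> bool"
  for M :: safa where
  init: "safa_reach M [] (sq0 M) (\<lambda>_. {})"
| step: "safa_reach M w q S \<Longrightarrow> (q, a, c, op, q') \<in> sdelta M \<Longrightarrow> cond_sat c d S \<Longrightarrow>
         safa_reach M (w @ [(a, d)]) q' (op_apply op d S)"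

definition safa_lang :: "safa \<Rightarrow> dword set" where
  "safa_lang M = {w. \<exists>q S. safa_reach M w q S \<and> q \<in> sF M}"

record cma =
  cQ :: "nat set"
  cq0 :: nat
  cFl :: "nat set"
  cFg :: "nat set"
  cdelta :: "(nat \<times> nat \<times> nat option \<times> nat) set"   (* None encodes \<bottom> *)

definition cma_wf :: "nat set \<Rightarrow> cma \<Rightarrow> bool" where
  "cma_wf \<Sigma> A \<longleftrightarrow> finite (cQ A) \<and> cq0 A \<in> cQ A \<and> cFg A \<subseteq> cFl A \<and> cFl A \<subseteq> cQ A \<and>
     (\<forall>(q, a, p, q') \<in> cdelta A. q \<in> cQ A \<and> a \<in> \<Sigma> \<and> q' \<in> cQ A \<and> set_option p \<subseteq> cQ A)"

inductive cma_reach :: "cma \<Rightarrow> dword \<Rightarrow> nat \<Rightarrow> (nat \<Rightarrow> nat option) \<Rightarrow> bool"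
  for A :: cma where
  init: "cma_reach A [] (cq0 A) (\<lambda>_. None)"
| step: "cma_reach A w q f \<Longrightarrow> (q, a, f d, q') \<in> cdelta A \<Longrightarrow>
         cma_reach A (w @ [(a, d)]) q' (f(d := Some q'))"

definition cma_lang :: "cma \<Rightarrow> dword set" where
  "cma_lang A = {w. \<exists>q f. cma_reach A w q f \<and> q \<in> cFg A \<and>
                         (\<forall>d \<in> snd ` set w. \<exists>p \<in> cFl A. f d = Some p)}"

end

theory Submission
  imports Defs "HOL-Library.Nat_Bijection"
begin

(* A CMA simulates a SAFA by keeping in its state the SAFA state together with the
   profile of the data value just read, i.e. the set of indices i with d in h_i. The
   profile of d changes only when d is read, so the class memory of d always holds the
   current profile of d, which is all a SAFA transition needs to know about d.

   Conversely, no SAFA accepts the words over a single letter in which every data value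
   occurs an even number of times, although a CMA does. Run a SAFA with m sets on
   (0 1 ... N-1)^R with N = 2^m + 1 and R even, R > m N. The sets only grow and at most
   m N pairs (t, x) with x < N can enter them, so some sweep 0 1 ... N-1 leaves all sets
   unchanged. Two of the N data values have the same profile there; renaming one into
   the other inside that sweep gives an accepting run on a word in which the renamed
   value occurs R - 1 times, an odd number. *)

lemma safa_wf_transitionD:
  assumes "safa_wf \<Sigma> M" and "(q, a, c, op, q') \<in> sdelta M"
  shows "q \<in> sQ M" "a \<in> \<Sigma>" "q' \<in> sQ M"
    and "c \<in> InSet ` {..<sm M} \<union> NotInSet ` {..<sm M}"
    and "op \<in> insert NoOp (Ins ` {..<sm M})"
  using assms unfolding safa_wf_def
  by (fastforce split: safa_cond.splits safa_op.splits)+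

definition profile :: "(nat \<Rightarrow> nat set) \<Rightarrow> nat \<Rightarrow> nat set" where
  "profile S d = {i. d \<in> S i}"

fun cond_prof :: "safa_cond \<Rightarrow> nat set \<Rightarrow> bool" where
  "cond_prof (InSet i) T \<longleftrightarrow> i \<in> T"
| "cond_prof (NotInSet i) T \<longleftrightarrow> i \<notin> T"

fun op_prof :: "safa_op \<Rightarrow> nat set \<Rightarrow> nat set" where
  "op_prof NoOp T = T"
| "op_prof (Ins j) T = insert j T"

lemma cond_sat_iff_cond_prof: "cond_sat c d S \<longleftrightarrow> cond_prof c (profile S d)"
  by (cases c) (auto simp: profile_def)

lemma profile_op_apply:
  "profile (op_apply op d S) d' = (if d' = d then op_prof op (profile S d) else profile S d')"
  by (cases op) (auto simp: profile_def)

lemma op_prof_bounded: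
  "op \<in> insert NoOp (Ins ` {..<m}) \<Longrightarrow> T \<subseteq> {..<m} \<Longrightarrow> op_prof op T \<subseteq> {..<m}"
  by auto

definition state_code :: "nat \<Rightarrow> nat set \<Rightarrow> nat" where
  "state_code q T = prod_encode (q, set_encode T)"

definition code_state :: "nat \<Rightarrow> nat" where
  "code_state p = fst (prod_decode p)"

definition code_prof :: "nat \<Rightarrow> nat set" where
  "code_prof p = set_decode (snd (prod_decode p))"

lemma code_state_state_code [simp]: "code_state (state_code q T) = q"
  by (simp add: code_state_def state_code_def)

lemma code_prof_state_code [simp]: "finite T \<Longrightarrow> code_prof (state_code q T) = T"
  by (simp add: code_prof_def state_code_def)

definition memory_prof :: "nat option \<Rightarrow> nat set" where
  "memory_prof P = (case P of None \<Rightarrow> {} | Some p \<Rightarrow> code_prof p)"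

(* Profiles are kept inside {..<sm M}: set_decode inverts set_encode only on finite sets. *)
definition safa_codes :: "safa \<Rightarrow> nat set" where
  "safa_codes M = {state_code q T | q T. q \<in> sQ M \<and> T \<subseteq> {..<sm M}}"

lemma finite_safa_codes:
  assumes "finite (sQ M)"
  shows "finite (safa_codes M)"
proof -
  have "safa_codes M = (\<lambda>(q, T). state_code q T) ` (sQ M \<times> Pow {..<sm M})"
    by (auto simp: safa_codes_def)
  then show ?thesis
    using assms by simp
qed

lemma safa_codesD:
  assumes "p \<in> safa_codes M"
  shows "code_state p \<in> sQ M" "code_prof p \<subseteq> {..<sm M}"
  using assms finite_subset[of _ "{..<sm M}"] by (auto simp: safa_codes_def)

lemma memory_prof_bounded: "set_option P \<subseteq> safa_codes M \<Longrightarrow> memory_prof P \<subseteq> {..<sm M}"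
  by (cases P) (auto simp: memory_prof_def dest: safa_codesD)

definition cma_of_safa :: "safa \<Rightarrow> cma" where
  "cma_of_safa M = \<lparr> cQ = safa_codes M, cq0 = state_code (sq0 M) {}, cFl = safa_codes M,
     cFg = {p \<in> safa_codes M. code_state p \<in> sF M},
     cdelta = {(p, a, P, state_code q' (op_prof op (memory_prof P))) | p a P c op q'.
        p \<in> safa_codes M \<and> set_option P \<subseteq> safa_codes M \<and>
        (code_state p, a, c, op, q') \<in> sdelta M \<and> cond_prof c (memory_prof P)} \<rparr>"

lemma cma_of_safa_simps:
  "cQ (cma_of_safa M) = safa_codes M" "cq0 (cma_of_safa M) = state_code (sq0 M) {}"
  "cFl (cma_of_safa M) = safa_codes M"
  "cFg (cma_of_safa M) = {p \<in> safa_codes M. code_state p \<in> sF M}"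
  by (simp_all add: cma_of_safa_def)

lemma cma_of_safa_wf:
  assumes wf: "safa_wf \<Sigma> M"
  shows "cma_wf \<Sigma> (cma_of_safa M)"
proof -
  have "a \<in> \<Sigma> \<and> state_code q' (op_prof op (memory_prof P)) \<in> safa_codes M"
    if "set_option P \<subseteq> safa_codes M" "(q, a, c, op, q') \<in> sdelta M" for P q a c op q'
    using safa_wf_transitionD[OF wf that(2)] memory_prof_bounded[OF that(1)] op_prof_bounded
    unfolding safa_codes_def by blast
  then have "\<forall>(p, a, P, p') \<in> cdelta (cma_of_safa M). p \<in> safa_codes M \<and> a \<in> \<Sigma> \<and>
      p' \<in> safa_codes M \<and> set_option P \<subseteq> safa_codes M"
    unfolding cma_of_safa_def by auto
  moreover have "state_code (sq0 M) {} \<in> safa_codes M"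
    using wf by (auto simp: safa_wf_def safa_codes_def)
  ultimately show ?thesis
    using wf by (auto simp: cma_wf_def cma_of_safa_simps safa_wf_def finite_safa_codes)
qed

definition safa_cma_sim :: "safa \<Rightarrow> nat \<Rightarrow> (nat \<Rightarrow> nat set) \<Rightarrow> nat \<Rightarrow> (nat \<Rightarrow> nat option) \<Rightarrow> bool" where
  "safa_cma_sim M q S p f \<longleftrightarrow> p \<in> safa_codes M \<and> code_state p = q \<and>
     (\<forall>d. set_option (f d) \<subseteq> safa_codes M \<and> memory_prof (f d) = profile S d)"

lemma safa_cma_sim_init:
  "safa_wf \<Sigma> M \<Longrightarrow> safa_cma_sim M (sq0 M) (\<lambda>_. {}) (state_code (sq0 M) {}) (\<lambda>_. None)"
  by (auto simp: safa_cma_sim_def safa_wf_def safa_codes_def memory_prof_def profile_def)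

lemma safa_cma_sim_step:
  fixes d :: nat
  assumes wf: "safa_wf \<Sigma> M" and sim: "safa_cma_sim M q S p f"
    and tr: "(q, a, c, op, q') \<in> sdelta M"
  defines "p' \<equiv> state_code q' (op_prof op (profile S d))"
  shows "safa_cma_sim M q' (op_apply op d S) p' (f(d \<mapsto> p'))"
proof -
  have "profile S d \<subseteq> {..<sm M}"
    using sim memory_prof_bounded unfolding safa_cma_sim_def by metis
  then have bounded: "op_prof op (profile S d) \<subseteq> {..<sm M}"
    using op_prof_bounded safa_wf_transitionD(5)[OF wf tr] by blast
  then have "p' \<in> safa_codes M"
    using safa_wf_transitionD(3)[OF wf tr] unfolding p'_def safa_codes_def by blast
  moreover have "code_prof p' = op_prof op (profile S d)"
    using bounded finite_subset unfolding p'_def by (metis code_prof_state_code finite_lessThan)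
  ultimately show ?thesis
    using sim by (auto simp: safa_cma_sim_def p'_def memory_prof_def profile_op_apply)
qed

lemma cma_of_safa_transition_iff:
  assumes "safa_cma_sim M q S p f"
  shows "(p, a, f d, p') \<in> cdelta (cma_of_safa M) \<longleftrightarrow>
    (\<exists>c op q'. (q, a, c, op, q') \<in> sdelta M \<and> cond_sat c d S \<and>
       p' = state_code q' (op_prof op (profile S d)))"
  using assms by (auto simp: cma_of_safa_def safa_cma_sim_def cond_sat_iff_cond_prof)

lemma safa_reach_imp_cma_reach:
  assumes wf: "safa_wf \<Sigma> M"
  shows "safa_reach M w q S \<Longrightarrow> \<exists>p f. cma_reach (cma_of_safa M) w p f \<and> safa_cma_sim M q S p f"
proof (induction rule: safa_reach.induct)
  case init
  show ?case
    using cma_reach.init[of "cma_of_safa M"] safa_cma_sim_init[OF wf]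
    by (auto simp: cma_of_safa_simps)
next
  case (step w q S a c op q' d)
  then obtain p f where run: "cma_reach (cma_of_safa M) w p f" and sim: "safa_cma_sim M q S p f"
    by blast
  define p' where "p' = state_code q' (op_prof op (profile S d))"
  have "(p, a, f d, p') \<in> cdelta (cma_of_safa M)"
    using cma_of_safa_transition_iff[OF sim] step.hyps p'_def by blast
  with run sim show ?case
    using cma_reach.step safa_cma_sim_step[OF wf sim step.hyps(2)] unfolding p'_def by blast
qed

lemma cma_reach_imp_safa_reach:
  assumes wf: "safa_wf \<Sigma> M"
  shows "cma_reach (cma_of_safa M) w p f \<Longrightarrow>
    \<exists>S. safa_reach M w (code_state p) S \<and> safa_cma_sim M (code_state p) S p f"
proof (induction rule: cma_reach.induct)
  case init
  show ?case
    using safa_reach.init[of M] safa_cma_sim_init[OF wf] by (auto simp: cma_of_safa_simps)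
next
  case (step w p f a d p')
  then obtain S where run: "safa_reach M w (code_state p) S"
    and sim: "safa_cma_sim M (code_state p) S p f"
    by blast
  from step.hyps(2) obtain c op q' where tr: "(code_state p, a, c, op, q') \<in> sdelta M"
    and cond: "cond_sat c d S" and p': "p' = state_code q' (op_prof op (profile S d))"
    unfolding cma_of_safa_transition_iff[OF sim] by blast
  show ?case
    unfolding p' code_state_state_code
    using safa_reach.step[OF run tr cond] safa_cma_sim_step[OF wf sim tr] by blast
qed

lemma cma_reach_memory_defined: "cma_reach A w p f \<Longrightarrow> d \<in> snd ` set w \<Longrightarrow> f d \<noteq> None"
  by (induction rule: cma_reach.induct) auto

lemma cma_of_safa_lang:
  assumes wf: "safa_wf \<Sigma> M"
  shows "cma_lang (cma_of_safa M) = safa_lang M"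
proof
  show "cma_lang (cma_of_safa M) \<subseteq> safa_lang M"
  proof
    fix w assume "w \<in> cma_lang (cma_of_safa M)"
    then obtain p f where run: "cma_reach (cma_of_safa M) w p f" and "code_state p \<in> sF M"
      by (auto simp: cma_lang_def cma_of_safa_simps)
    then show "w \<in> safa_lang M"
      using cma_reach_imp_safa_reach[OF wf run] by (auto simp: safa_lang_def)
  qed
  show "safa_lang M \<subseteq> cma_lang (cma_of_safa M)"
  proof
    fix w assume "w \<in> safa_lang M"
    then obtain q S where "safa_reach M w q S" and final: "q \<in> sF M"
      by (auto simp: safa_lang_def)
    then obtain p f where run: "cma_reach (cma_of_safa M) w p f" and sim: "safa_cma_sim M q S p f"
      using safa_reach_imp_cma_reach[OF wf] by blast
    have "\<exists>p' \<in> safa_codes M. f d = Some p'" if "d \<in> snd ` set w" for d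
      using cma_reach_memory_defined[OF run that] sim by (auto simp: safa_cma_sim_def)
    moreover have "p \<in> cFg (cma_of_safa M)"
      using sim final by (auto simp: cma_of_safa_simps safa_cma_sim_def)
    ultimately show "w \<in> cma_lang (cma_of_safa M)"
      using run unfolding cma_lang_def cma_of_safa_simps by blast
  qed
qed

inductive safa_run :: "safa \<Rightarrow> nat \<Rightarrow> (nat \<Rightarrow> nat set) \<Rightarrow> dword \<Rightarrow> nat \<Rightarrow> (nat \<Rightarrow> nat set) \<Rightarrow> bool"
  for M p S where
  Nil: "safa_run M p S [] p S"
| snoc: "safa_run M p S w q T \<Longrightarrow> (q, a, c, op, q') \<in> sdelta M \<Longrightarrow> cond_sat c d T \<Longrightarrow>
    safa_run M p S (w @ [(a, d)]) q' (op_apply op d T)"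

lemma safa_reach_iff_safa_run: "safa_reach M w q S \<longleftrightarrow> safa_run M (sq0 M) (\<lambda>_. {}) w q S"
proof
  show "safa_reach M w q S \<Longrightarrow> safa_run M (sq0 M) (\<lambda>_. {}) w q S"
    by (induction rule: safa_reach.induct) (auto intro: safa_run.intros)
  show "safa_run M (sq0 M) (\<lambda>_. {}) w q S \<Longrightarrow> safa_reach M w q S"
    by (induction rule: safa_run.induct) (auto intro: safa_reach.intros)
qed

lemma safa_run_append:
  "safa_run M p1 S1 v p' S' \<Longrightarrow> safa_run M p S u p1 S1 \<Longrightarrow> safa_run M p S (u @ v) p' S'"
proof (induction rule: safa_run.induct)
  case (snoc w q T a c op q' d)
  then show ?case using safa_run.snoc[of M p S "u @ w"] by simp
qed simp

lemma safa_run_appendE: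
  assumes "safa_run M p S (u @ v) p' S'"
  obtains p1 S1 where "safa_run M p S u p1 S1" and "safa_run M p1 S1 v p' S'"
  using assms
proof (induction v arbitrary: p' S' thesis rule: rev_induct)
  case Nil
  then show ?case by (auto intro: safa_run.Nil)
next
  case (snoc x v)
  from snoc.prems(2) obtain q T a c op d where x: "x = (a, d)"
    and run: "safa_run M p S (u @ v) q T" and tr: "(q, a, c, op, p') \<in> sdelta M"
    and cond: "cond_sat c d T" and S': "S' = op_apply op d T"
    by (cases rule: safa_run.cases) auto
  obtain p1 S1 where "safa_run M p S u p1 S1" and "safa_run M p1 S1 v q T"
    using snoc.IH[OF _ run] by blast
  then show ?case
    using snoc.prems(1) safa_run.snoc[OF _ tr cond] x S' by blast
qed

lemma op_apply_mono: "S t \<subseteq> op_apply op d S t"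
  by (cases op) auto

lemma safa_run_mono: "safa_run M p S w q T \<Longrightarrow> S t \<subseteq> T t"
  by (induction rule: safa_run.induct) (use op_apply_mono in blast)+

lemma safa_run_new_elems:
  assumes wf: "safa_wf \<Sigma> M"
  shows "safa_run M p S w q T \<Longrightarrow> x \<in> T t \<Longrightarrow> x \<in> S t \<or> (t < sm M \<and> x \<in> snd ` set w)"
proof (induction rule: safa_run.induct)
  case (snoc w q T a c op q' d)
  then show ?case
    using safa_wf_transitionD(5)[OF wf snoc.hyps(2)] by (auto split: if_splits)
qed simp

definition low_marks :: "nat \<Rightarrow> nat \<Rightarrow> (nat \<Rightarrow> nat set) \<Rightarrow> (nat \<times> nat) set" where
  "low_marks m N S = {(t, x). t < m \<and> x < N \<and> x \<in> S t}"

lemma low_marks_subset: "low_marks m N S \<subseteq> {..<m} \<times> {..<N}"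
  by (auto simp: low_marks_def)

lemma finite_low_marks: "finite (low_marks m N S)"
  by (rule finite_subset[OF low_marks_subset]) simp

lemma card_low_marks_le: "card (low_marks m N S) \<le> m * N"
  using card_mono[OF _ low_marks_subset] by (simp add: card_cartesian_product)

lemma safa_run_unchanged_sets:
  assumes wf: "safa_wf \<Sigma> M" and run: "safa_run M p S w q S'"
    and data: "snd ` set w \<subseteq> {..<N}"
    and card: "card (low_marks (sm M) N S') \<le> card (low_marks (sm M) N S)"
  shows "S' = S"
proof -
  have "low_marks (sm M) N S \<subseteq> low_marks (sm M) N S'"
    using safa_run_mono[OF run] by (auto simp: low_marks_def)
  then have marks: "low_marks (sm M) N S = low_marks (sm M) N S'"
    using card_seteq[OF finite_low_marks] card by blast
  have "x \<in> S t" if "x \<in> S' t" for x t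
    using safa_run_new_elems[OF wf run that] data marks that
    by (auto simp: low_marks_def set_eq_iff)
  then show ?thesis
    using safa_run_mono[OF run] by blast
qed

lemma safa_run_rename_data:
  assumes wf: "safa_wf \<Sigma> M" and run: "safa_run M p S w q S"
    and same: "\<And>d t. t < sm M \<Longrightarrow> h d \<in> S t \<longleftrightarrow> d \<in> S t"
  shows "safa_run M p S (map (apsnd h) w) q S"
proof -
  (* the sets only grow, so every configuration of such a run has the sets S *)
  have "safa_run M p S w q S' \<Longrightarrow> (\<And>t. S' t \<subseteq> S t) \<Longrightarrow> safa_run M p S (map (apsnd h) w) q S'"
    for S'
  proof (induction rule: safa_run.induct)
    case Nil
    then show ?case by (simp add: safa_run.Nil)
  next
    case (snoc w q T a c op q' d)
    have "T = S"
      using safa_run_mono[OF snoc.hyps(1)] op_apply_mono snoc.prems by blast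
    then have unchanged: "op_apply op d S = S"
      using op_apply_mono snoc.prems by blast
    have "cond_sat c (h d) S"
      using safa_wf_transitionD(4)[OF wf snoc.hyps(2)] snoc.hyps(3) same \<open>T = S\<close> by auto
    moreover have "op_apply op (h d) S = op_apply op d S"
    proof (cases op)
      case (Ins j)
      then have "d \<in> S j" and "j < sm M"
        using unchanged safa_wf_transitionD(5)[OF wf snoc.hyps(2)] by (auto simp: fun_upd_idem_iff)
      then show ?thesis
        using Ins same by (simp add: insert_absorb)
    qed simp
    moreover have "safa_run M p S (map (apsnd h) w) q S"
      using snoc.IH \<open>T = S\<close> by simp
    ultimately have "safa_run M p S (map (apsnd h) w @ [(a, h d)]) q' (op_apply op d S)"
      using safa_run.snoc[OF _ snoc.hyps(2), where d = "h d"] by metis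
    then show ?case
      using \<open>T = S\<close> by simp
  qed
  then show ?thesis using run by blast
qed

lemma same_membership_pigeonhole:
  fixes S :: "nat \<Rightarrow> nat set"
  shows "\<exists>i j. i < 2 ^ m + 1 \<and> j < 2 ^ m + 1 \<and> i \<noteq> j \<and> (\<forall>t<m. i \<in> S t \<longleftrightarrow> j \<in> S t)"
proof -
  define g where "g x = {t. t < m \<and> x \<in> S t}" for x
  have "card (g ` {..<2 ^ m + 1}) \<le> card (Pow {..<m})"
    by (rule card_mono) (auto simp: g_def)
  also have "\<dots> < card {..<2 ^ m + 1::nat}"
    by (simp add: card_Pow)
  finally obtain i j where "i < 2 ^ m + 1" "j < 2 ^ m + 1" "i \<noteq> j" "g i = g j"
    using pigeonhole[of g "{..<2 ^ m + 1}"] unfolding inj_on_def by blast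
  then show ?thesis
    unfolding g_def by blast
qed

definition sweep :: "nat \<Rightarrow> dword" where
  "sweep N = map (\<lambda>d. (0, d)) [0..<N]"

definition sweeps :: "nat \<Rightarrow> nat \<Rightarrow> dword" where
  "sweeps N k = concat (replicate k (sweep N))"

lemma sweeps_Suc: "sweeps N (Suc k) = sweep N @ sweeps N k"
  by (simp add: sweeps_def)

lemma letters_sweep: "fst ` set (sweep N) \<subseteq> {0}"
  by (auto simp: sweep_def)

lemma letters_sweeps: "fst ` set (sweeps N k) \<subseteq> {0}"
  by (auto simp: sweeps_def sweep_def)

lemma data_sweep: "snd ` set (sweep N) = {..<N}"
  by (auto simp: sweep_def image_iff)

lemma count_upt: "count_list [0..<N] d = (if d < N then 1 else 0)"
  by (induction N) auto

lemma count_sweeps: "count_list (map snd (sweeps N k)) d = (if d < N then k else 0)"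
  by (induction k) (simp_all add: sweeps_def sweep_def comp_def count_upt)

lemma safa_run_sweeps_stable_sweep:
  assumes wf: "safa_wf \<Sigma> M"
  shows "safa_run M p S (sweeps N k) p' S' \<Longrightarrow>
    card (low_marks (sm M) N S') < card (low_marks (sm M) N S) + k \<Longrightarrow>
    \<exists>a b p1 p2 S1. a + b + 1 = k \<and> safa_run M p S (sweeps N a) p1 S1 \<and>
      safa_run M p1 S1 (sweep N) p2 S1 \<and> safa_run M p2 S1 (sweeps N b) p' S'"
proof (induction k arbitrary: p S)
  case 0
  have "low_marks (sm M) N S \<subseteq> low_marks (sm M) N S'"
    using safa_run_mono[OF "0.prems"(1)] by (auto simp: low_marks_def)
  then have "card (low_marks (sm M) N S) \<le> card (low_marks (sm M) N S')"
    by (rule card_mono[OF finite_low_marks])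
  with "0.prems"(2) show ?case
    by simp
next
  case (Suc k)
  obtain p1 S1 where first: "safa_run M p S (sweep N) p1 S1"
    and rest: "safa_run M p1 S1 (sweeps N k) p' S'"
    using Suc.prems(1) unfolding sweeps_Suc by (rule safa_run_appendE)
  show ?case
  proof (cases "card (low_marks (sm M) N S1) \<le> card (low_marks (sm M) N S)")
    case True
    then have "S1 = S"
      using safa_run_unchanged_sets[OF wf first] data_sweep by blast
    moreover have "safa_run M p S (sweeps N 0) p S"
      by (simp add: sweeps_def safa_run.Nil)
    moreover have "0 + k + 1 = Suc k"
      by simp
    ultimately show ?thesis
      using first rest by blast
  next
    case False
    then have "card (low_marks (sm M) N S') < card (low_marks (sm M) N S1) + k"
      using Suc.prems(2) by simp
    then obtain a b p2 p3 S2 where "a + b + 1 = k" and "safa_run M p1 S1 (sweeps N a) p2 S2"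
      and "safa_run M p2 S2 (sweep N) p3 S2" and "safa_run M p3 S2 (sweeps N b) p' S'"
      using Suc.IH[OF rest] by blast
    moreover have "safa_run M p S (sweeps N (Suc a)) p2 S2"
      using safa_run_append[OF _ first] \<open>safa_run M p1 S1 (sweeps N a) p2 S2\<close>
      by (simp add: sweeps_Suc)
    ultimately show ?thesis
      by (metis add_Suc)
  qed
qed

lemma safa_run_sweeps_miscount:
  assumes wf: "safa_wf \<Sigma> M" and run: "safa_run M p S (sweeps N k) p' S'"
    and N: "N = 2 ^ sm M + 1" and long: "sm M * N < k"
  obtains w i where "safa_run M p S w p' S'" and "fst ` set w \<subseteq> {0}"
    and "Suc (count_list (map snd w) i) = k"
proof -
  have "card (low_marks (sm M) N S') < card (low_marks (sm M) N S) + k"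
    using card_low_marks_le[of "sm M" N S'] long by linarith
  then obtain a b p1 p2 S1 where k: "a + b + 1 = k" and run1: "safa_run M p S (sweeps N a) p1 S1"
    and run2: "safa_run M p1 S1 (sweep N) p2 S1" and run3: "safa_run M p2 S1 (sweeps N b) p' S'"
    using safa_run_sweeps_stable_sweep[OF wf run] by blast
  obtain i j where "i < N" "j < N" "i \<noteq> j" and same: "\<forall>t<sm M. i \<in> S1 t \<longleftrightarrow> j \<in> S1 t"
    using same_membership_pigeonhole[of "sm M" S1] N by blast
  define h where "h d = (if d = i then j else d)" for d
  have "safa_run M p1 S1 (map (apsnd h) (sweep N)) p2 S1"
    using safa_run_rename_data[OF wf run2] same by (simp add: h_def)
  then have "safa_run M p S (sweeps N a @ map (apsnd h) (sweep N) @ sweeps N b) p' S'"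
    using safa_run_append[OF _ run1] safa_run_append[OF run3] by blast
  moreover have "fst ` set (sweeps N a @ map (apsnd h) (sweep N) @ sweeps N b) \<subseteq> {0}"
    using letters_sweep letters_sweeps by (force simp: image_iff)
  moreover have "count_list (map h (map snd (sweep N))) i = 0"
    using \<open>i \<noteq> j\<close> by (auto simp: h_def count_list_0_iff)
  then have "Suc (count_list (map snd (sweeps N a @ map (apsnd h) (sweep N) @ sweeps N b)) i) = k"
    using k \<open>i < N\<close> by (simp add: count_sweeps comp_def)
  ultimately show ?thesis
    using that by blast
qed

definition parity_cma :: cma where
  "parity_cma = \<lparr> cQ = {0, 1}, cq0 = 0, cFl = {0}, cFg = {0},
     cdelta = {(q, 0, P, p) | q P p.
       q \<in> {0, 1} \<and> (P, p) \<in> {(None, 1), (Some 0, 1), (Some 1, 0)}} \<rparr>"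

lemma parity_cma_simps: "cq0 parity_cma = 0" "cFl parity_cma = {0}" "cFg parity_cma = {0}"
  by (simp_all add: parity_cma_def)

lemma parity_cma_wf: "cma_wf {0} parity_cma"
  by (auto simp: cma_wf_def parity_cma_def)

lemma parity_cma_reachD:
  "cma_reach parity_cma w q f \<Longrightarrow> fst ` set w \<subseteq> {0} \<and>
     (\<forall>d. f d = (if count_list (map snd w) d = 0 then None
                  else Some (count_list (map snd w) d mod 2))) \<and>
     q = (if w = [] then 0 else count_list (map snd w) (snd (last w)) mod 2)"
proof (induction rule: cma_reach.induct)
  case init
  then show ?case by (simp add: parity_cma_def)
next
  case (step w q f a d q')
  then show ?case
    by (auto simp: parity_cma_def split: if_splits) presburger+
qed

lemma parity_cma_reach_exists: "fst ` set w \<subseteq> {0} \<Longrightarrow> \<exists>q f. cma_reach parity_cma w q f"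
proof (induction w rule: rev_induct)
  case Nil
  then show ?case using cma_reach.init by blast
next
  case (snoc x w)
  then obtain q f where run: "cma_reach parity_cma w q f"
    by auto
  obtain d where x: "x = (0, d)"
    using snoc.prems by (cases x) auto
  have "q \<in> {0, 1}" and "f d \<in> {None, Some 0, Some 1}"
    using parity_cma_reachD[OF run] by auto
  then have "(q, 0, f d, if f d = Some 1 then 0 else 1) \<in> cdelta parity_cma"
    by (auto simp: parity_cma_def)
  then show ?case
    using cma_reach.step[OF run] x by blast
qed

lemma parity_cma_lang:
  "cma_lang parity_cma = {w. fst ` set w \<subseteq> {0} \<and> (\<forall>d. even (count_list (map snd w) d))}"
proof (intro set_eqI iffI)
  fix w assume "w \<in> cma_lang parity_cma"
  then obtain q f where run: "cma_reach parity_cma w q f"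
    and local: "\<forall>d \<in> snd ` set w. f d = Some 0"
    unfolding cma_lang_def parity_cma_simps by blast
  have "even (count_list (map snd w) d)" for d
  proof (cases "count_list (map snd w) d = 0")
    case False
    then have "d \<in> snd ` set w"
      using count_list_0_iff[of "map snd w" d] by simp
    moreover have "f d = Some (count_list (map snd w) d mod 2)"
      using parity_cma_reachD[OF run] False by simp
    ultimately show ?thesis
      using local by auto
  qed simp
  moreover have "fst ` set w \<subseteq> {0}"
    using parity_cma_reachD[OF run] by (rule conjunct1)
  ultimately show "w \<in> {w. fst ` set w \<subseteq> {0} \<and> (\<forall>d. even (count_list (map snd w) d))}"
    by blast
next
  fix w :: dword assume "w \<in> {w. fst ` set w \<subseteq> {0} \<and> (\<forall>d. even (count_list (map snd w) d))}"
  then have letters: "fst ` set w \<subseteq> {0}" and even: "\<And>d. even (count_list (map snd w) d)"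
    by auto
  obtain q f where run: "cma_reach parity_cma w q f"
    using parity_cma_reach_exists[OF letters] by blast
  have "q = (if w = [] then 0 else count_list (map snd w) (snd (last w)) mod 2)"
    using parity_cma_reachD[OF run] by blast
  then have "q = 0"
    using even by simp
  moreover have "f d = Some 0" if "d \<in> snd ` set w" for d
  proof -
    have "f d = (if count_list (map snd w) d = 0 then None
                 else Some (count_list (map snd w) d mod 2))"
      using parity_cma_reachD[OF run] by blast
    then show ?thesis
      using that even count_list_0_iff[of "map snd w" d] by simp
  qed
  ultimately show "w \<in> cma_lang parity_cma"
    using run unfolding cma_lang_def parity_cma_simps by blast
qed

lemma parity_lang_not_safa:
  assumes wf: "safa_wf {0} M"
  shows "safa_lang M \<noteq> cma_lang parity_cma"
proof
  assume lang: "safa_lang M = cma_lang parity_cma"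
  define N :: nat where "N = 2 ^ sm M + 1"
  define R where "R = 2 * (sm M * N + 1)"
  have "sweeps N R \<in> cma_lang parity_cma"
    by (simp add: parity_cma_lang letters_sweeps count_sweeps R_def)
  then obtain q S where run: "safa_run M (sq0 M) (\<lambda>_. {}) (sweeps N R) q S"
    and final: "q \<in> sF M"
    by (auto simp: lang[symmetric] safa_lang_def safa_reach_iff_safa_run)
  have "sm M * N < R"
    by (simp add: R_def)
  then obtain w i where run': "safa_run M (sq0 M) (\<lambda>_. {}) w q S"
    and count: "Suc (count_list (map snd w) i) = R"
    using safa_run_sweeps_miscount[OF wf run N_def] by blast
  have "w \<in> safa_lang M"
    using run' final by (auto simp: safa_lang_def safa_reach_iff_safa_run)
  moreover have "odd (count_list (map snd w) i)"
    using count by (auto simp: R_def)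
  then have "w \<notin> cma_lang parity_cma"
    by (auto simp: parity_cma_lang)
  ultimately show False
    using lang by simp
qed

theorem corollary2:
  shows "(\<forall>\<Sigma> M. finite \<Sigma> \<and> safa_wf \<Sigma> M \<longrightarrow>
            (\<exists>A. cma_wf \<Sigma> A \<and> cma_lang A = safa_lang M))
       \<and> (\<exists>\<Sigma> A. finite \<Sigma> \<and> cma_wf \<Sigma> A \<and>
            \<not> (\<exists>M. safa_wf \<Sigma> M \<and> safa_lang M = cma_lang A))"
proof
  show "\<forall>\<Sigma> M. finite \<Sigma> \<and> safa_wf \<Sigma> M \<longrightarrow> (\<exists>A. cma_wf \<Sigma> A \<and> cma_lang A = safa_lang M)"
    using cma_of_safa_wf cma_of_safa_lang by blast
  show "\<exists>\<Sigma> A. finite \<Sigma> \<and> cma_wf \<Sigma> A \<and> \<not> (\<exists>M. safa_wf \<Sigma> M \<and> safa_lang M = cma_lang A)"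
  proof (intro exI conjI)
    show "finite {0 :: nat}"
      by simp
    show "cma_wf {0} parity_cma"
      by (rule parity_cma_wf)
    show "\<not> (\<exists>M. safa_wf {0} M \<and> safa_lang M = cma_lang parity_cma)"
      using parity_lang_not_safa by blast
  qed
qed

end
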